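(* Let $n\ge2$, $c\in(0,\infty)$, and let $\Sigma_n\in\mathbb{R}^{n\times n}$ have entries $$(\Sigma_n)_{ij}=\frac{\pi}{i+j}+c\,\frac{4\pi^2}{(i+1)(j+1)}\ \text{ if } c\in(0,1],\qquad (\Sigma_n)_{ij}=\frac{\pi}{c(i+j)}+\frac{4\pi^2}{(i+1)(j+1)}\ \text{ if } c\in(1,\infty).$$ Then $\Sigma_n=LU$ with $L=(l_{ij})$, $U=(u_{ij})$ given by $l_{ij}=0$ for $i<j$, $$l_{ij}=\frac{\prod_{k=1}^{j-1}(i-k)\prod_{k=1}^{j}(j+k)}{\prod_{k=1}^{j-1}(j-k)\prod_{k=1}^{j}(i+k)}\quad(i\ge j),$$ $u_{ij}=0$ for $i>j$, $u_{1j}=\frac{\pi(1+2c\pi)}{j+1}$ if $c\in(0,1]$, $u_{1j}=\frac{\pi(1+2c\pi)}{c(j+1)}$ if $c\in(1,\infty)$, and for $1<i\le j$: $$u_{ij}=\frac{\pi\prod_{k=1}^{i-1}(i-k)(j-k)}{(i+j)\prod_{k=1}^{i-1}(i+k)\prod_{k=1}^{i-1}(j+k)}\ \ (c\in(0,1]),\qquad u_{ij}=\frac{\pi\prod_{k=1}^{i-1}(i-k)(j-k)}{c(i+j)\prod_{k=1}^{i-1}(i+k)\prod_{k=1}^{i-1}(j+k)}\ \ (c\in(1,\infty)).$$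
   Context: $\Sigma_n$ is the asymptotic covariance matrix, in the critical regime $t\delta_t^d\to c$, of the "vector of natural increasing powers" $(\tilde L_t^{(0)},\dots,\tilde L_t^{(n-1)})$ of normalized length power functionals in dimension $d=2$ (so $\tau_i=i-1$, $\kappa_2=\pi$) for a window of volume $1$. *)

theory Defs
  imports "HOL-Analysis.Analysis"
begin

text \<open>Matrices of size n x n are represented as functions nat => nat => real,
  with indices ranging over {1..n} (1-based, as in the paper).\<close>

definition Sigma_mat :: "real \<Rightarrow> nat \<Rightarrow> nat \<Rightarrow> real" where
  "Sigma_mat c i j =
     (if c \<le> 1 then pi / real (i + j) + c * (4 * pi^2) / (real (i + 1) * real (j + 1))
      else pi / (c * real (i + j)) + (4 * pi^2) / (real (i + 1) * real (j + 1)))"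

definition L_mat :: "nat \<Rightarrow> nat \<Rightarrow> real" where
  "L_mat i j =
     (if i < j then 0
      else ((\<Prod>k = 1..j - 1. real i - real k) * (\<Prod>k = 1..j. real j + real k)) /
           ((\<Prod>k = 1..j - 1. real j - real k) * (\<Prod>k = 1..j. real i + real k)))"

definition U_mat :: "real \<Rightarrow> nat \<Rightarrow> nat \<Rightarrow> real" where
  "U_mat c i j =
     (if i > j then 0
      else if i = 1 then
        (if c \<le> 1 then pi * (1 + 2 * c * pi) / real (j + 1)
         else pi * (1 + 2 * c * pi) / (c * real (j + 1)))
      else
        (if c \<le> 1 then
           pi * (\<Prod>k = 1..i - 1. (real i - real k) * (real j - real k)) /
           (real (i + j) * (\<Prod>k = 1..i - 1. real i + real k) * (\<Prod>k = 1..i - 1. real j + real k))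
         else
           pi * (\<Prod>k = 1..i - 1. (real i - real k) * (real j - real k)) /
           (c * real (i + j) * (\<Prod>k = 1..i - 1. real i + real k) * (\<Prod>k = 1..i - 1. real j + real k))))"

end

theory Submission
  imports Defs
begin

text \<open>For both ranges of \<open>c\<close> the matrix is \<open>\<Sigma> = \<alpha> H + \<beta> v v\<^sup>T\<close> with the Cauchy matrix
  \<open>H\<^sub>i\<^sub>j = 1 / (i + j)\<close> and \<open>v\<^sub>i = 1 / (i + 1)\<close>. The entries of \<open>L\<close> and \<open>U\<close> are those of the
  classical LU factorisation of \<open>H\<close>, except that the rank-one part is absorbed into the first
  row of \<open>U\<close>. For the Cauchy part, \<open>L\<^sub>i\<^sub>k U\<^sub>k\<^sub>j = \<alpha> T\<^sub>k(i, j)\<close>, and the terms \<open>T\<^sub>k(x, y)\<close> telescope: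
  \<open>1 / (x + y) = T\<^sub>1 + \<dots> + T\<^sub>N + R\<^sub>N\<close>, where the remainder \<open>R\<^sub>N(x, y)\<close> contains the factor
  \<open>(x - 1) \<cdots> (x - N)\<close> and so vanishes for \<open>x \<in> {1..N}\<close>.\<close>

definition cauchy_term :: "real \<Rightarrow> real \<Rightarrow> nat \<Rightarrow> real" where
  "cauchy_term x y k = 2 * real k * (\<Prod>m = 1..k - 1. (x - real m) * (y - real m)) /
     ((\<Prod>m = 1..k. x + real m) * (\<Prod>m = 1..k. y + real m))"

definition cauchy_remainder :: "real \<Rightarrow> real \<Rightarrow> nat \<Rightarrow> real" where
  "cauchy_remainder x y N = (\<Prod>m = 1..N. (x - real m) * (y - real m)) /
     ((x + y) * (\<Prod>m = 1..N. x + real m) * (\<Prod>m = 1..N. y + real m))"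

text \<open>The telescoping step rests on \<open>(x + n)(y + n) - (x - n)(y - n) = 2n(x + y)\<close>.\<close>

lemma cauchy_remainder_Suc:
  fixes x y :: real
  assumes "x > 0" "y > 0"
  shows "cauchy_remainder x y N - cauchy_remainder x y (Suc N) = cauchy_term x y (Suc N)"
proof -
  define n where "n = real (Suc N)"
  define P where "P = (\<Prod>m = 1..N. (x - real m) * (y - real m))"
  define A where "A = (\<Prod>m = 1..N. x + real m)"
  define B where "B = (\<Prod>m = 1..N. y + real m)"
  have "A > 0" "B > 0" "n > 0"
    using assms by (auto simp: A_def B_def n_def intro: prod_pos)
  moreover have "x + n > 0" "y + n > 0" "x + y > 0"
    using assms \<open>n > 0\<close> by auto
  ultimately have "P / ((x + y) * A * B) - P * ((x - n) * (y - n)) / ((x + y) * (A * (x + n)) * (B * (y + n)))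
      = 2 * n * P / (A * (x + n) * (B * (y + n)))"
    by (simp add: divide_simps) (simp add: algebra_simps)
  then show ?thesis
    by (simp add: cauchy_remainder_def cauchy_term_def prod.cl_ivl_Suc prod.distrib
        n_def P_def A_def B_def mult_ac)
qed

lemma sum_cauchy_term:
  fixes x y :: real
  assumes "x > 0" "y > 0"
  shows "(\<Sum>k = 1..N. cauchy_term x y k) = 1 / (x + y) - cauchy_remainder x y N"
proof (induction N)
  case 0
  then show ?case by (simp add: cauchy_remainder_def)
next
  case (Suc N)
  then show ?case using cauchy_remainder_Suc[OF assms, of N] by simp
qed

lemma cauchy_remainder_of_nat_eq_0:
  assumes "1 \<le> i" "i \<le> N"
  shows "cauchy_remainder (real i) y N = 0"
  using assms by (auto simp: cauchy_remainder_def intro!: prod_zero bexI[of _ i])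

corollary sum_cauchy_term_of_nat:
  fixes y :: real
  assumes "i \<in> {1..N}" "y > 0"
  shows "(\<Sum>k = 1..N. cauchy_term (real i) y k) = 1 / (real i + y)"
  using assms sum_cauchy_term[of "real i" y N] cauchy_remainder_of_nat_eq_0[of i N y] by simp

lemma cauchy_term_of_nat_eq_0:
  assumes "1 \<le> i" "i < k"
  shows "cauchy_term (real i) y k = 0"
  using assms by (auto simp: cauchy_term_def intro!: prod_zero bexI[of _ i])

lemma cauchy_term_commute: "cauchy_term x y k = cauchy_term y x k"
  by (simp add: cauchy_term_def prod.distrib mult_ac)

definition cauchy_coeff :: "real \<Rightarrow> real" where
  "cauchy_coeff c = (if c \<le> 1 then pi else pi / c)"

definition rank_one_coeff :: "real \<Rightarrow> real" where
  "rank_one_coeff c = (if c \<le> 1 then c * (4 * pi^2) else 4 * pi^2)"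

lemma Sigma_mat_eq:
  "Sigma_mat c i j = cauchy_coeff c / real (i + j) + rank_one_coeff c / (real (i + 1) * real (j + 1))"
  by (simp add: Sigma_mat_def cauchy_coeff_def rank_one_coeff_def)

lemma L_mat_mult_U_mat_first:
  assumes "1 \<le> i" "1 \<le> j"
  shows "L_mat i 1 * U_mat c 1 j =
    cauchy_coeff c * cauchy_term (real i) (real j) 1 + rank_one_coeff c / (real (i + 1) * real (j + 1))"
proof -
  have "U_mat c 1 j = pi * (1 + 2 * c * pi) / (if c \<le> 1 then 1 else c) / real (j + 1)"
    using assms by (simp add: U_mat_def)
  also have "pi * (1 + 2 * c * pi) / (if c \<le> 1 then 1 else c) = cauchy_coeff c + rank_one_coeff c / 2"
    by (auto simp: cauchy_coeff_def rank_one_coeff_def power2_eq_square field_simps)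
  finally have U: "U_mat c 1 j = (cauchy_coeff c + rank_one_coeff c / 2) / (1 + real j)"
    by simp
  have L: "L_mat i 1 = 2 / (1 + real i)"
    using assms by (simp add: L_mat_def)
  have "2 / X * ((a + b / 2) / Y) = a * (2 / (X * Y)) + b / (X * Y)"
    if "X \<noteq> 0" "Y \<noteq> 0" for X Y a b :: real
    using that by (simp add: field_simps)
  moreover have "1 + real i \<noteq> 0" "1 + real j \<noteq> 0"
    by linarith+
  ultimately show ?thesis
    unfolding L U by (simp add: cauchy_term_def add.commute)
qed

lemma L_mat_mult_U_mat_higher:
  assumes "2 \<le> k" "k \<le> i" "k \<le> j"
  shows "L_mat i k * U_mat c k j = cauchy_coeff c * cauchy_term (real i) (real j) k"
proof -
  obtain k' where k': "k = Suc k'" "k' \<ge> 1" using assms by (cases k) auto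
  define Di where "Di = (\<Prod>m = 1..k'. real i - real m)"
  define Dj where "Dj = (\<Prod>m = 1..k'. real j - real m)"
  define Dk where "Dk = (\<Prod>m = 1..k'. real k - real m)"
  define Sk where "Sk = (\<Prod>m = 1..k'. real k + real m)"
  define Si where "Si = (\<Prod>m = 1..k'. real i + real m)"
  define Sj where "Sj = (\<Prod>m = 1..k'. real j + real m)"
  have nonzero: "Dk \<noteq> 0" "Sk \<noteq> 0" "Si \<noteq> 0" "Sj \<noteq> 0"
      "real k + real i \<noteq> 0" "real k + real j \<noteq> 0"
    unfolding Dk_def Sk_def Si_def Sj_def using k' by (auto simp: prod_zero_iff)
  have L: "L_mat i k = Di * (Sk * (2 * real k)) / (Dk * (Si * (real k + real i)))"
    using assms k' by (simp add: L_mat_def Di_def Sk_def Dk_def Si_def prod.cl_ivl_Suc)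
  have U: "U_mat c k j = cauchy_coeff c * (Dk * Dj / ((real k + real j) * Sk * Sj))"
    using assms k' by (auto simp: U_mat_def cauchy_coeff_def Dj_def Sk_def Dk_def Sj_def prod.distrib)
  have T: "cauchy_term (real i) (real j) k =
      2 * real k * (Di * Dj) / (Si * (real k + real i) * (Sj * (real k + real j)))"
    using k' by (simp add: cauchy_term_def Di_def Dj_def Si_def Sj_def prod.distrib prod.cl_ivl_Suc
        add.commute)
  \<comment> \<open>stated over atoms \<open>u, v\<close> so that \<open>field_simps\<close> cancels the factors instead of expanding them\<close>
  have "Di * (Sk * (2 * K)) / (Dk * (Si * u)) * (C * (Dk * Dj / (v * Sk * Sj)))
      = C * (2 * K * (Di * Dj) / (Si * u * (Sj * v)))" if "u \<noteq> 0" "v \<noteq> 0" for K u v C :: real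
    using nonzero that by (simp add: field_simps)
  then show ?thesis
    unfolding L U T using nonzero by blast
qed

lemma L_mat_mult_U_mat_eq_0:
  assumes "i < k \<or> j < k"
  shows "L_mat i k * U_mat c k j = 0"
  using assms by (auto simp: L_mat_def U_mat_def)

lemma L_mat_mult_U_mat:
  assumes "1 \<le> i" "1 \<le> j" "1 \<le> k"
  shows "L_mat i k * U_mat c k j = cauchy_coeff c * cauchy_term (real i) (real j) k
    + (if k = 1 then rank_one_coeff c / (real (i + 1) * real (j + 1)) else 0)"
proof -
  consider "k = 1" | "2 \<le> k" "k \<le> i" "k \<le> j" | "i < k" | "j < k"
    using assms by linarith
  then show ?thesis
  proof cases
    case 1
    then show ?thesis using assms L_mat_mult_U_mat_first by simp
  next
    case 2
    then show ?thesis using L_mat_mult_U_mat_higher by simp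
  next
    case 3
    then show ?thesis using assms L_mat_mult_U_mat_eq_0 cauchy_term_of_nat_eq_0 by simp
  next
    case 4
    then show ?thesis
      using assms L_mat_mult_U_mat_eq_0 cauchy_term_of_nat_eq_0 cauchy_term_commute by simp
  qed
qed

theorem proposition7p11:
  fixes n :: nat and c :: real
  assumes "n \<ge> 2" and "c > 0"
  shows "\<forall>i\<in>{1..n}. \<forall>j\<in>{1..n}.
           Sigma_mat c i j = (\<Sum>k = 1..n. L_mat i k * U_mat c k j)"
proof (intro ballI)
  fix i j assume i: "i \<in> {1..n}" and j: "j \<in> {1..n}"
  have "(\<Sum>k = 1..n. L_mat i k * U_mat c k j) =
      (\<Sum>k = 1..n. cauchy_coeff c * cauchy_term (real i) (real j) k
        + (if k = 1 then rank_one_coeff c / (real (i + 1) * real (j + 1)) else 0))"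
    using i j by (intro sum.cong refl L_mat_mult_U_mat) auto
  also have "\<dots> = cauchy_coeff c * (\<Sum>k = 1..n. cauchy_term (real i) (real j) k)
      + rank_one_coeff c / (real (i + 1) * real (j + 1))"
    using i by (simp add: sum.distrib sum_distrib_left)
  also have "(\<Sum>k = 1..n. cauchy_term (real i) (real j) k) = 1 / (real i + real j)"
    using i j by (intro sum_cauchy_term_of_nat) auto
  finally show "Sigma_mat c i j = (\<Sum>k = 1..n. L_mat i k * U_mat c k j)"
    by (simp add: Sigma_mat_eq)
qed

end
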